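(* Let $\kappa<0$ and $\mu<0$, and set $\sigma=\sqrt{\mu/\kappa}>0$. Fix a real constant $K_0$ and a choice of signs (the same choice in each formula below). For $\tau>0$ define \[ \tilde q_0(x)=\sigma\tanh\!\Big(\pm\sigma\sqrt{\tfrac{\kappa(\mu\tau-1)}{2}}\,x\pm K_0\Big),\qquad \tilde q_1(x)=\frac{1}{1-\mu\tau}\,\tilde q_0'(x), \] which give standing front solutions $e^{i\mu t}(\tilde q_0(x),\tilde q_1(x))$ of the NLSH system $i\partial_tq_0+\partial_xq_1=-\kappa|q_0|^2q_0$, $i\tau\partial_tq_1=\partial_xq_0-q_1$, and let \[ u^-(x)=\sigma\tanh\!\Big(\pm\sigma\sqrt{-\kappa/2}\,x\pm K_0\Big) \] (the amplitude of the dark-soliton ground state $e^{i\mu t}u^-(x)$ of the NLS equation $iu_t+u_{xx}+\kappa|u|^2u=0$). Then as $\tau\to0$, the family $\{\tilde q_0\}_{\tau>0}$ converges uniformly on $\mathbb{R}$ to $u^-$ at a rate linear in $\tau$, i.e. $\sup_{x\in\mathbb{R}}|\tilde q_0(x)-u^-(x)|=O(\tau)$, and $\{\tilde q_1\}_{\tau>0}$ converges uniformly on $\mathbb{R}$ to $(u^-)'$ at a rate linear in $\tau$.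
   Context: Standing-wave ansatz: $(q_0,q_1)(x,t)=e^{i\mu t}(\tilde q_0(x),\tilde q_1(x))$ with $\mu\in\mathbb{R}$, which reduces NLSH to $\tilde q_0'=(1-\mu\tau)\tilde q_1$, $\tilde q_1'=(\mu-\kappa\tilde q_0^2)\tilde q_0$. *)

theory Defs
  imports "HOL-Analysis.Analysis"
begin

definition sigma_nlsh :: "real \<Rightarrow> real \<Rightarrow> real" where
  "sigma_nlsh \<kappa> \<mu> = sqrt (\<mu> / \<kappa>)"

text \<open>Standing front amplitude q0~ of NLSH; s1, s2 in {1,-1} encode the sign choices.\<close>
definition q0_front :: "real \<Rightarrow> real \<Rightarrow> real \<Rightarrow> real \<Rightarrow> real \<Rightarrow> real \<Rightarrow> real \<Rightarrow> real" where
  "q0_front \<kappa> \<mu> K0 s1 s2 \<tau> x =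
     sigma_nlsh \<kappa> \<mu> * tanh (s1 * sigma_nlsh \<kappa> \<mu> * sqrt (\<kappa> * (\<mu> * \<tau> - 1) / 2) * x + s2 * K0)"

definition q1_front :: "real \<Rightarrow> real \<Rightarrow> real \<Rightarrow> real \<Rightarrow> real \<Rightarrow> real \<Rightarrow> real \<Rightarrow> real" where
  "q1_front \<kappa> \<mu> K0 s1 s2 \<tau> x = deriv (q0_front \<kappa> \<mu> K0 s1 s2 \<tau>) x / (1 - \<mu> * \<tau>)"

definition u_dark :: "real \<Rightarrow> real \<Rightarrow> real \<Rightarrow> real \<Rightarrow> real \<Rightarrow> real \<Rightarrow> real" where
  "u_dark \<kappa> \<mu> K0 s1 s2 x =
     sigma_nlsh \<kappa> \<mu> * tanh (s1 * sigma_nlsh \<kappa> \<mu> * sqrt (- \<kappa> / 2) * x + s2 * K0)"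

end

theory Submission imports Defs begin

text \<open>
  Both fronts are obtained from the dark soliton by dilating the argument of \<open>tanh\<close>
  by the factor \<open>l = sqrt (1 - \<mu> \<tau>) = 1 + O(\<tau>)\<close>. By the mean value theorem in the
  dilation parameter, \<open>tanh (l y + k) - tanh (y + k)\<close> is \<open>(l - 1) y sech\<^sup>2 (\<xi> y + k)\<close>
  for some \<open>\<xi> \<in> (1, l)\<close>; since \<open>|y| \<le> |\<xi> y + k| + |k|\<close> and \<open>|z| sech\<^sup>2 z \<le> 1\<close>, this is
  \<open>O(l - 1)\<close> uniformly in \<open>y\<close>. The derivatives are \<open>sech\<^sup>2\<close> profiles, whose difference
  is controlled by the difference of the \<open>tanh\<close> values plus the change of the prefactor.
\<close>

lemma cosh_real_ge_half_one_plus_abs: "(1 + \<bar>z\<bar>) / 2 \<le> cosh (z::real)"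
proof -
  have "1 + \<bar>z\<bar> \<le> exp \<bar>z\<bar> + exp (- \<bar>z\<bar>)"
    using exp_ge_add_one_self[of "\<bar>z\<bar>"] exp_gt_zero[of "- \<bar>z\<bar>"] by linarith
  also have "\<dots> = 2 * cosh \<bar>z\<bar>"
    by (simp add: cosh_def)
  finally show ?thesis by simp
qed

lemma one_minus_tanh_real_squared: "1 - tanh (z::real) ^ 2 = 1 / cosh z ^ 2"
proof -
  have "1 - tanh z ^ 2 = (cosh z ^ 2 - sinh z ^ 2) / cosh z ^ 2"
    by (simp add: tanh_def power_divide diff_divide_distrib)
  thus ?thesis by (simp add: hyperbolic_pythagoras)
qed

lemma one_minus_tanh_real_squared_bounds: "0 \<le> 1 - tanh (z::real) ^ 2" "1 - tanh z ^ 2 \<le> 1"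
  using abs_square_le_1[of "tanh z"] tanh_real_bounds[of z] by auto

lemma abs_mult_one_minus_tanh_real_squared_le_1: "\<bar>z\<bar> * (1 - tanh (z::real) ^ 2) \<le> 1"
proof -
  have "\<bar>z\<bar> \<le> ((1 + \<bar>z\<bar>) / 2) ^ 2"
    using sum_squares_ge_zero[of "\<bar>z\<bar> - 1" 0] by (simp add: power2_eq_square field_simps)
  also have "\<dots> \<le> cosh z ^ 2"
    using cosh_real_ge_half_one_plus_abs[of z] by (intro power_mono) auto
  finally show ?thesis
    by (simp add: one_minus_tanh_real_squared field_simps)
qed

lemma tanh_dilation_diff_le:
  fixes y k l :: real
  assumes "1 \<le> l"
  shows "\<bar>tanh (l * y + k) - tanh (y + k)\<bar> \<le> (1 + \<bar>k\<bar>) * (l - 1)"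
proof (cases "l = 1")
  case True
  then show ?thesis by simp
next
  case False
  with assms have "1 < l" by simp
  have "\<forall>t. 1 \<le> t \<and> t \<le> l \<longrightarrow>
      ((\<lambda>t. tanh (t * y + k)) has_real_derivative (1 - tanh (t * y + k) ^ 2) * y) (at t)"
    by (auto intro!: derivative_eq_intros)
  then obtain \<xi> where \<xi>: "1 < \<xi>"
    and mvt: "tanh (l * y + k) - tanh (1 * y + k) = (l - 1) * ((1 - tanh (\<xi> * y + k) ^ 2) * y)"
    using MVT2[OF \<open>1 < l\<close>, of "\<lambda>t. tanh (t * y + k)" "\<lambda>t. (1 - tanh (t * y + k) ^ 2) * y"]
    by blast
  define z where "z = \<xi> * y + k"
  define s where "s = 1 - tanh z ^ 2"
  have s: "0 \<le> s" "s \<le> 1" "\<bar>z\<bar> * s \<le> 1"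
    unfolding s_def
    using one_minus_tanh_real_squared_bounds abs_mult_one_minus_tanh_real_squared_le_1 by auto
  have "\<bar>y\<bar> \<le> \<xi> * \<bar>y\<bar>"
    using \<xi> by (simp add: mult_le_cancel_right1)
  also have "\<dots> = \<bar>z - k\<bar>"
    using \<xi> by (simp add: z_def abs_mult)
  finally have "\<bar>y\<bar> \<le> \<bar>z\<bar> + \<bar>k\<bar>" by linarith
  then have "s * \<bar>y\<bar> \<le> \<bar>z\<bar> * s + s * \<bar>k\<bar>"
    by (metis mult_left_mono s(1) distrib_left mult.commute)
  also have "\<dots> \<le> 1 + \<bar>k\<bar>"
    using s mult_left_le_one_le[of "\<bar>k\<bar>" s] by simp
  finally have "s * \<bar>y\<bar> \<le> 1 + \<bar>k\<bar>" .
  moreover have "\<bar>tanh (l * y + k) - tanh (y + k)\<bar> = (l - 1) * (s * \<bar>y\<bar>)"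
    using mvt \<open>1 < l\<close> s(1) by (simp add: z_def s_def abs_mult)
  ultimately show ?thesis
    using \<open>1 < l\<close> by (simp add: mult.commute mult_left_mono)
qed

lemma one_minus_square_div_diff_le:
  fixes T0 T1 l :: real
  assumes "\<bar>T0\<bar> \<le> 1" "\<bar>T1\<bar> \<le> 1" "1 \<le> l"
  shows "\<bar>(1 - T1 ^ 2) / l - (1 - T0 ^ 2)\<bar> \<le> 2 * \<bar>T1 - T0\<bar> + (l - 1)"
proof -
  define P where "P = (T0 - T1) * (T0 + T1)"
  define R where "R = (1 - T0 ^ 2) * (l - 1)"
  have "(1 - T1 ^ 2) / l - (1 - T0 ^ 2) = P / l - R / l"
    using assms(3) by (simp add: P_def R_def field_simps power2_eq_square)
  moreover have "\<bar>P / l\<bar> \<le> 2 * \<bar>T1 - T0\<bar>"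
  proof -
    have "\<bar>P / l\<bar> \<le> \<bar>P\<bar>"
      using assms(3) by (simp add: abs_divide divide_le_eq mult_le_cancel_left1)
    also have "\<dots> \<le> \<bar>T1 - T0\<bar> * 2"
      unfolding P_def abs_mult using assms(1,2)
      by (intro mult_mono) (auto simp: abs_minus_commute)
    finally show ?thesis by simp
  qed
  moreover have "0 \<le> R / l" "R / l \<le> l - 1"
  proof -
    have "0 \<le> 1 - T0 ^ 2" "1 - T0 ^ 2 \<le> 1"
      using assms(1) abs_square_le_1 by auto
    then have "0 \<le> R" "R \<le> l - 1"
      using assms(3) mult_left_le[of "1 - T0 ^ 2" "l - 1"] by (auto simp: R_def mult.commute)
    then show "0 \<le> R / l" "R / l \<le> l - 1"
      using assms(3) by (auto simp: divide_le_eq mult_le_cancel_left1 order_trans)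
  qed
  ultimately show ?thesis by linarith
qed

lemma deriv_scaled_tanh_affine:
  "deriv (\<lambda>x. \<sigma> * tanh (c * x + k)) x = \<sigma> * ((1 - tanh (c * x + k) ^ 2) * (c::real))"
  by (rule DERIV_imp_deriv) (auto intro!: derivative_eq_intros)

lemma scaled_tanh_dilation_diff_le:
  fixes \<sigma> a k l x :: real
  assumes "1 \<le> l"
  shows "\<bar>\<sigma> * tanh (l * a * x + k) - \<sigma> * tanh (a * x + k)\<bar> \<le> \<bar>\<sigma>\<bar> * (1 + \<bar>k\<bar>) * (l - 1)"
proof -
  have "\<bar>\<sigma> * tanh (l * a * x + k) - \<sigma> * tanh (a * x + k)\<bar>
      = \<bar>\<sigma>\<bar> * \<bar>tanh (l * (a * x) + k) - tanh (a * x + k)\<bar>"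
    by (simp add: abs_mult mult.assoc flip: right_diff_distrib)
  also have "\<dots> \<le> \<bar>\<sigma>\<bar> * ((1 + \<bar>k\<bar>) * (l - 1))"
    using tanh_dilation_diff_le[OF assms] by (intro mult_left_mono) auto
  finally show ?thesis by (simp add: mult.assoc)
qed

lemma deriv_scaled_tanh_dilation_diff_le:
  fixes \<sigma> a k l x :: real
  assumes "1 \<le> l"
  shows "\<bar>deriv (\<lambda>x. \<sigma> * tanh (l * a * x + k)) x / l ^ 2 - deriv (\<lambda>x. \<sigma> * tanh (a * x + k)) x\<bar>
           \<le> \<bar>\<sigma> * a\<bar> * (3 + 2 * \<bar>k\<bar>) * (l - 1)"
proof -
  define T1 where "T1 = tanh (l * (a * x) + k)"
  define T0 where "T0 = tanh (a * x + k)"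
  have T_bounds: "\<bar>T0\<bar> \<le> 1" "\<bar>T1\<bar> \<le> 1"
    unfolding T0_def T1_def using tanh_real_bounds by (auto simp: abs_le_iff less_imp_le)
  have "deriv (\<lambda>x. \<sigma> * tanh (l * a * x + k)) x / l ^ 2 - deriv (\<lambda>x. \<sigma> * tanh (a * x + k)) x
      = \<sigma> * a * ((1 - T1 ^ 2) / l - (1 - T0 ^ 2))"
    unfolding deriv_scaled_tanh_affine T0_def T1_def using assms
    by (simp add: field_simps power2_eq_square)
  then have "\<bar>deriv (\<lambda>x. \<sigma> * tanh (l * a * x + k)) x / l ^ 2 - deriv (\<lambda>x. \<sigma> * tanh (a * x + k)) x\<bar>
      = \<bar>\<sigma> * a\<bar> * \<bar>(1 - T1 ^ 2) / l - (1 - T0 ^ 2)\<bar>"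
    by (simp add: abs_mult)
  also have "\<dots> \<le> \<bar>\<sigma> * a\<bar> * (2 * \<bar>T1 - T0\<bar> + (l - 1))"
    using one_minus_square_div_diff_le[OF T_bounds assms] by (intro mult_left_mono) auto
  also have "\<dots> \<le> \<bar>\<sigma> * a\<bar> * (2 * ((1 + \<bar>k\<bar>) * (l - 1)) + (l - 1))"
    using tanh_dilation_diff_le[OF assms] unfolding T0_def T1_def
    by (intro mult_left_mono) auto
  finally show ?thesis by (simp add: algebra_simps)
qed

lemma sqrt_one_plus_bounds:
  assumes "0 \<le> t"
  shows "1 \<le> sqrt (1 + t)" "sqrt (1 + t) \<le> 1 + (t::real)"
  using assms by (auto intro: real_le_lsqrt simp: power2_eq_square)

lemma q0_front_eq:
  "q0_front \<kappa> \<mu> K0 s1 s2 \<tau> = (\<lambda>x. sigma_nlsh \<kappa> \<mu> *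
     tanh (sqrt (1 - \<mu> * \<tau>) * (s1 * sigma_nlsh \<kappa> \<mu> * sqrt (- \<kappa> / 2)) * x + s2 * K0))"
proof -
  have "sqrt (\<kappa> * (\<mu> * \<tau> - 1) / 2) = sqrt (1 - \<mu> * \<tau>) * sqrt (- \<kappa> / 2)"
    by (simp flip: real_sqrt_mult add: field_simps)
  then show ?thesis
    by (simp add: fun_eq_iff q0_front_def mult_ac)
qed

lemma u_dark_eq:
  "u_dark \<kappa> \<mu> K0 s1 s2 = (\<lambda>x. sigma_nlsh \<kappa> \<mu> *
     tanh ((s1 * sigma_nlsh \<kappa> \<mu> * sqrt (- \<kappa> / 2)) * x + s2 * K0))"
  by (simp add: fun_eq_iff u_dark_def)

lemma q0_front_u_dark_diff_le:
  assumes "\<mu> * \<tau> \<le> 0"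
  shows "\<bar>q0_front \<kappa> \<mu> K0 s1 s2 \<tau> x - u_dark \<kappa> \<mu> K0 s1 s2 x\<bar>
           \<le> \<bar>sigma_nlsh \<kappa> \<mu>\<bar> * (1 + \<bar>s2 * K0\<bar>) * (- \<mu> * \<tau>)"
proof -
  have l: "1 \<le> sqrt (1 - \<mu> * \<tau>)" "sqrt (1 - \<mu> * \<tau>) - 1 \<le> - \<mu> * \<tau>"
    using sqrt_one_plus_bounds[of "- \<mu> * \<tau>"] assms by simp_all
  have "\<bar>q0_front \<kappa> \<mu> K0 s1 s2 \<tau> x - u_dark \<kappa> \<mu> K0 s1 s2 x\<bar>
      \<le> \<bar>sigma_nlsh \<kappa> \<mu>\<bar> * (1 + \<bar>s2 * K0\<bar>) * (sqrt (1 - \<mu> * \<tau>) - 1)"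
    unfolding q0_front_eq u_dark_eq by (rule scaled_tanh_dilation_diff_le[OF l(1)])
  also have "\<dots> \<le> \<bar>sigma_nlsh \<kappa> \<mu>\<bar> * (1 + \<bar>s2 * K0\<bar>) * (- \<mu> * \<tau>)"
    using l(2) by (intro mult_left_mono) auto
  finally show ?thesis .
qed

lemma q1_front_deriv_u_dark_diff_le:
  assumes "\<mu> * \<tau> \<le> 0"
  shows "\<bar>q1_front \<kappa> \<mu> K0 s1 s2 \<tau> x - deriv (u_dark \<kappa> \<mu> K0 s1 s2) x\<bar>
           \<le> \<bar>sigma_nlsh \<kappa> \<mu> * (s1 * sigma_nlsh \<kappa> \<mu> * sqrt (- \<kappa> / 2))\<bar>
              * (3 + 2 * \<bar>s2 * K0\<bar>) * (- \<mu> * \<tau>)"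
proof -
  have l: "1 \<le> sqrt (1 - \<mu> * \<tau>)" "sqrt (1 - \<mu> * \<tau>) - 1 \<le> - \<mu> * \<tau>"
    using sqrt_one_plus_bounds[of "- \<mu> * \<tau>"] assms by simp_all
  have "\<bar>q1_front \<kappa> \<mu> K0 s1 s2 \<tau> x - deriv (u_dark \<kappa> \<mu> K0 s1 s2) x\<bar>
      \<le> \<bar>sigma_nlsh \<kappa> \<mu> * (s1 * sigma_nlsh \<kappa> \<mu> * sqrt (- \<kappa> / 2))\<bar>
         * (3 + 2 * \<bar>s2 * K0\<bar>) * (sqrt (1 - \<mu> * \<tau>) - 1)"
    using deriv_scaled_tanh_dilation_diff_le[OF l(1),
        of "sigma_nlsh \<kappa> \<mu>" "s1 * sigma_nlsh \<kappa> \<mu> * sqrt (- \<kappa> / 2)" "s2 * K0" x] assms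
    unfolding q1_front_def q0_front_eq u_dark_eq by simp
  also have "\<dots> \<le> \<bar>sigma_nlsh \<kappa> \<mu> * (s1 * sigma_nlsh \<kappa> \<mu> * sqrt (- \<kappa> / 2))\<bar>
                   * (3 + 2 * \<bar>s2 * K0\<bar>) * (- \<mu> * \<tau>)"
    using l(2) by (intro mult_left_mono) auto
  finally show ?thesis .
qed

text \<open>
  Only \<open>\<mu> < 0\<close> is used: Isabelle's \<open>sqrt\<close> is odd on all of \<open>\<real>\<close>, so the
  profiles are defined and the estimates hold for any \<open>\<kappa>\<close>, \<open>s1\<close> and \<open>s2\<close>.
\<close>

theorem proposition1:
  fixes \<kappa> \<mu> K0 s1 s2 :: real
  assumes "\<kappa> < 0" and "\<mu> < 0"
    and "s1 \<in> {1, -1}" and "s2 \<in> {1, -1}"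
  shows "\<exists>C \<delta>. \<delta> > 0 \<and> (\<forall>\<tau>. 0 < \<tau> \<and> \<tau> < \<delta> \<longrightarrow> (\<forall>x.
            \<bar>q0_front \<kappa> \<mu> K0 s1 s2 \<tau> x - u_dark \<kappa> \<mu> K0 s1 s2 x\<bar> \<le> C * \<tau>)) \<and>
         (\<exists>C \<delta>. \<delta> > 0 \<and> (\<forall>\<tau>. 0 < \<tau> \<and> \<tau> < \<delta> \<longrightarrow> (\<forall>x.
            \<bar>q1_front \<kappa> \<mu> K0 s1 s2 \<tau> x - deriv (u_dark \<kappa> \<mu> K0 s1 s2) x\<bar> \<le> C * \<tau>)))"
proof -
  have "\<mu> * \<tau> \<le> 0" if "0 < \<tau>" for \<tau>
    using \<open>\<mu> < 0\<close> that by (simp add: mult_nonpos_nonneg)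
  then have "\<bar>q0_front \<kappa> \<mu> K0 s1 s2 \<tau> x - u_dark \<kappa> \<mu> K0 s1 s2 x\<bar>
               \<le> (\<bar>sigma_nlsh \<kappa> \<mu>\<bar> * (1 + \<bar>s2 * K0\<bar>) * - \<mu>) * \<tau>"
    and "\<bar>q1_front \<kappa> \<mu> K0 s1 s2 \<tau> x - deriv (u_dark \<kappa> \<mu> K0 s1 s2) x\<bar>
               \<le> (\<bar>sigma_nlsh \<kappa> \<mu> * (s1 * sigma_nlsh \<kappa> \<mu> * sqrt (- \<kappa> / 2))\<bar>
                  * (3 + 2 * \<bar>s2 * K0\<bar>) * - \<mu>) * \<tau>"
    if "0 < \<tau>" for \<tau> x
    using q0_front_u_dark_diff_le q1_front_deriv_u_dark_diff_le that by (simp_all add: mult.assoc)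
  then show ?thesis
    using zero_less_one by blast
qed

end
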